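(* Consider three agents $[3]=\{1,2,3\}$ and the twelve items $\mathcal{M}=\{(j,k): j\in\{1,2,3\},k\in\{1,2,3,4\}\}$. Let $$B=\begin{pmatrix}1&1&1&1\\1&1&1&1\\1&1&1&1\end{pmatrix},\ O=\begin{pmatrix}17&25&12&1\\2&22&3&28\\11&0&21&23\end{pmatrix},\ E^1=\begin{pmatrix}-3&1&1&1\\0&0&0&0\\0&0&0&0\end{pmatrix},$$ $$E^2=\begin{pmatrix}-3&1&0&0\\1&0&0&0\\1&0&0&0\end{pmatrix},\ E^3=\begin{pmatrix}-3&0&1&0\\0&0&1&0\\0&0&0&1\end{pmatrix},$$ and for $i\in[3]$ let $u_i$ be the additive function with $u_i((j,k))=10^6 B_{jk}+10^3 O_{jk}+E^i_{jk}$. Let $d_i=-u_i$. Then there is no allocation $(S_1,S_2,S_3)\in\Pi_3(\mathcal{M})$ with $d_i(S_i)\ge MmS_{d_i}^3(\mathcal{M})$ for all $i\in[3]$. In particular, an MmS allocation for chores need not exist.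
   Context: $\Pi_3(\mathcal{M})$ is the set of ordered 3-partitions of $\mathcal{M}$ (parts may be empty). For an additive function $v$ on subsets of $\mathcal{M}$, $MmS_{v}^N(\mathcal{M}):=\max_{(S_1,\ldots,S_N)\in\Pi_N(\mathcal{M})}\min_{j} v(S_j)$. An MmS allocation for an instance with utilities $(v_i)$ is an allocation with $v_i(S_i)\ge MmS_{v_i}^N(\mathcal{M})$ for all agents $i$. *)

theory Defs
  imports Complex_Main
begin

text \<open>Ordered N-partitions of M (parts indexed by 1..N, may be empty);
  parts outside the index range are fixed to be empty.\<close>
definition partitions :: "nat \<Rightarrow> 'a set \<Rightarrow> (nat \<Rightarrow> 'a set) set" where
  "partitions N M = {S. (\<forall>i\<in>{1..N}. S i \<subseteq> M)
      \<and> (\<forall>i\<in>{1..N}. \<forall>j\<in>{1..N}. i \<noteq> j \<longrightarrow> S i \<inter> S j = {})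
      \<and> (\<Union>i\<in>{1..N}. S i) = M
      \<and> (\<forall>i. i \<notin> {1..N} \<longrightarrow> S i = {})}"

definition MmS :: "nat \<Rightarrow> ('a set \<Rightarrow> real) \<Rightarrow> 'a set \<Rightarrow> real" where
  "MmS N v M = Max ((\<lambda>S. Min ((\<lambda>j. v (S j)) ` {1..N})) ` partitions N M)"

definition items :: "(nat \<times> nat) set" where
  "items = {1..3} \<times> {1..4}"

definition Bmat :: "nat \<Rightarrow> nat \<Rightarrow> real" where
  "Bmat j k = 1"

definition Omat :: "nat \<Rightarrow> nat \<Rightarrow> real" where
  "Omat j k = [[17,25,12,1],[2,22,3,28],[11,0,21,23]] ! (j - 1) ! (k - 1)"

definition Emat :: "nat \<Rightarrow> nat \<Rightarrow> nat \<Rightarrow> real" where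
  "Emat i j k =
     [ [[-3,1,1,1],[0,0,0,0],[0,0,0,0]],
       [[-3,1,0,0],[1,0,0,0],[1,0,0,0]],
       [[-3,0,1,0],[0,0,1,0],[0,0,0,1]] ] ! (i - 1) ! (j - 1) ! (k - 1)"

definition uitem :: "nat \<Rightarrow> nat \<times> nat \<Rightarrow> real" where
  "uitem i x = 10^6 * Bmat (fst x) (snd x) + 10^3 * Omat (fst x) (snd x) + Emat i (fst x) (snd x)"

definition u :: "nat \<Rightarrow> (nat \<times> nat) set \<Rightarrow> real" where
  "u i S = (\<Sum>x\<in>S. uitem i x)"

definition d :: "nat \<Rightarrow> (nat \<times> nat) set \<Rightarrow> real" where
  "d i S = - u i S"

end

theory Submission
  imports Defs
begin

text \<open>The weights \<open>10^6 \<ggreater> 10^3 \<ggreater> 1\<close> make the costs lexicographic. Every agent \<open>i\<close> can split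
  the items into three bundles of four items, each of \<open>O\<close>-weight 55 and \<open>E\<^sup>i\<close>-weight 0, so
  in an MmS allocation her bundle costs her at most 4055000. Comparing with the totals (12 items,
  \<open>O\<close>-weight 165) forces every bundle to have four items, \<open>O\<close>-weight 55 and \<open>E\<^sup>i\<close>-weight at
  most 0. Only one bundle contains the item (1,1); the two agents holding the other bundles must
  then avoid the three items that \<open>E\<^sup>i\<close> makes dearer. This leaves each agent only two possible
  bundles, and bundles possible for different agents always intersect.\<close>

lemma atLeastAtMost_1_3: "{1..3::nat} = {1,2,3}"
  by auto

lemma finite_partitions: "finite M \<Longrightarrow> finite (partitions N M)"
proof -
  assume "finite M"
  then have "finite {S. \<forall>i. (i \<in> {1..N} \<longrightarrow> S i \<in> Pow M) \<and> (i \<notin> {1..N} \<longrightarrow> S i = {})}"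
    by (intro finite_set_of_finite_funs) auto
  then show ?thesis
    by (rule finite_subset[rotated]) (auto simp: partitions_def)
qed

lemma Min_le_MmS:
  assumes "finite M" "S \<in> partitions N M"
  shows "Min ((\<lambda>j. v (S j)) ` {1..N}) \<le> MmS N v M"
  unfolding MmS_def using assms by (intro Max_ge finite_imageI finite_partitions imageI)

lemma sum_over_partition:
  assumes "finite M" "S \<in> partitions N M"
  shows "sum f M = (\<Sum>i=1..N. sum f (S i))"
proof -
  have "M = (\<Union>i\<in>{1..N}. S i)" "\<forall>i\<in>{1..N}. finite (S i)"
    "\<forall>i\<in>{1..N}. \<forall>j\<in>{1..N}. i \<noteq> j \<longrightarrow> S i \<inter> S j = {}"
    using assms by (auto simp: partitions_def intro: finite_subset)
  then show ?thesis by (simp add: sum.UNION_disjoint)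
qed

definition tripartition :: "'a set \<Rightarrow> 'a set \<Rightarrow> 'a set \<Rightarrow> nat \<Rightarrow> 'a set" where
  "tripartition A B C = (\<lambda>i. if i = 1 then A else if i = 2 then B else if i = 3 then C else {})"

lemma tripartition_in_partitions:
  assumes "A \<inter> B = {}" "A \<inter> C = {}" "B \<inter> C = {}" "A \<union> B \<union> C = M"
  shows "tripartition A B C \<in> partitions 3 M"
  using assms unfolding partitions_def atLeastAtMost_1_3 by (auto simp: tripartition_def)

lemma min_le_MmS_3:
  assumes "finite M" "A \<inter> B = {}" "A \<inter> C = {}" "B \<inter> C = {}" "A \<union> B \<union> C = M"
  shows "min (v A) (min (v B) (v C)) \<le> MmS 3 v M"
proof -
  have "Min ((\<lambda>j. v (tripartition A B C j)) ` {1..3}) = min (v A) (min (v B) (v C))"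
    unfolding atLeastAtMost_1_3 by (simp add: tripartition_def min.assoc)
  then show ?thesis
    using Min_le_MmS[OF assms(1) tripartition_in_partitions[OF assms(2-5)], of v] by simp
qed

lemma sum_attains_bound_imp_eq:
  fixes f :: "'i \<Rightarrow> 'a::ordered_cancel_comm_monoid_add"
  assumes "finite I" "\<forall>i\<in>I. f i \<le> c" "(\<Sum>i\<in>I. c) \<le> sum f I" "i \<in> I"
  shows "f i = c"
proof (rule ccontr)
  assume "f i \<noteq> c"
  with assms(2,4) have "sum f I < (\<Sum>i\<in>I. c)"
    by (intro sum_strict_mono_ex1[OF assms(1,2)]) (auto simp: order.strict_iff_order)
  with assms(3) show False by simp
qed

lemma sum_as_indicator_sum:
  fixes f :: "'a \<Rightarrow> 'b::semiring_1"
  assumes "finite X" "A \<subseteq> X"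
  shows "sum f A = (\<Sum>x\<in>X. of_bool (x \<in> A) * f x)"
proof -
  have "sum f A = sum f (X \<inter> A)" using assms(2) by (simp add: Int_absorb1)
  also have "\<dots> = (\<Sum>x\<in>X. if x \<in> A then f x else 0)"
    using assms(1) by (rule sum.inter_restrict)
  finally show ?thesis by (auto intro!: sum.cong)
qed

lemma eq_one_of_two_within:
  assumes "A \<subseteq> X" "B \<subseteq> X" "C \<subseteq> X"
    and "(\<forall>x\<in>X. x \<in> A \<longleftrightarrow> x \<in> B) \<or> (\<forall>x\<in>X. x \<in> A \<longleftrightarrow> x \<in> C)"
  shows "A = B \<or> A = C"
  using assms by blast

lemma items_eq:
  "items = {(1,1),(1,2),(1,3),(1,4),(2,1),(2,2),(2,3),(2,4),(3,1),(3,2),(3,3),(3,4)}"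
proof -
  have "{1..4::nat} = {1,2,3,4}" by auto
  then show ?thesis unfolding items_def atLeastAtMost_1_3 by blast
qed

lemma finite_items: "finite items"
  by (simp add: items_eq)

lemma card_items: "card items = 12"
  by (simp add: items_eq)

lemma sum_Omat_items: "(\<Sum>(j,k)\<in>items. Omat j k) = 165"
  by (simp add: items_eq Omat_def)

lemma Omat_nonneg: "(j,k) \<in> items \<Longrightarrow> 0 \<le> Omat j k"
  by (auto simp: items_eq Omat_def)

lemma Omat_Ints: "(j,k) \<in> items \<Longrightarrow> Omat j k \<in> \<int>"
  by (auto simp: items_eq Omat_def)

lemma Emat_corner: "i \<in> {1..3} \<Longrightarrow> Emat i 1 1 = -3"
  unfolding atLeastAtMost_1_3 by (auto simp: Emat_def)

lemma Emat_nonneg: "i \<in> {1..3} \<Longrightarrow> (j,k) \<in> items - {(1,1)} \<Longrightarrow> 0 \<le> Emat i j k"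
  unfolding atLeastAtMost_1_3 by (auto simp: items_eq Emat_def)

lemma u_eq:
  "u i A = 10^6 * real (card A) + 10^3 * (\<Sum>(j,k)\<in>A. Omat j k) + (\<Sum>(j,k)\<in>A. Emat i j k)"
  by (simp add: u_def uitem_def Bmat_def split_def sum.distrib sum_distrib_left)

lemma sum_Emat_ge:
  assumes "i \<in> {1..3}" "A \<subseteq> items"
  shows "-3 \<le> (\<Sum>(j,k)\<in>A. Emat i j k)"
proof -
  have fin: "finite A" using assms(2) finite_items by (rule finite_subset)
  have rest: "0 \<le> (\<Sum>(j,k)\<in>A - {(1,1)}. Emat i j k)"
    using assms Emat_nonneg by (intro sum_nonneg) auto
  show ?thesis
  proof (cases "(1,1) \<in> A")
    case True
    with fin have "(\<Sum>(j,k)\<in>A. Emat i j k) = Emat i 1 1 + (\<Sum>(j,k)\<in>A - {(1,1)}. Emat i j k)"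
      by (simp add: sum.remove)
    with rest Emat_corner[OF assms(1)] show ?thesis by simp
  next
    case False
    with rest show ?thesis by simp
  qed
qed

lemma card_le_4_if_u_le:
  assumes "i \<in> {1..3}" "A \<subseteq> items" "u i A \<le> 4055000"
  shows "card A \<le> 4"
proof -
  have "0 \<le> (\<Sum>(j,k)\<in>A. Omat j k)"
    using assms(2) Omat_nonneg by (intro sum_nonneg) auto
  with assms(3) u_eq[of i A] sum_Emat_ge[OF assms(1,2)] have "1000000 * real (card A) \<le> 4055003"
    by simp
  then show ?thesis by simp
qed

lemma sum_Omat_le_55_if_u_le:
  assumes "i \<in> {1..3}" "A \<subseteq> items" "u i A \<le> 4055000" "card A = 4"
  shows "(\<Sum>(j,k)\<in>A. Omat j k) \<le> 55"
proof -
  have "(\<Sum>(j,k)\<in>A. Omat j k) \<in> \<int>"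
    using assms(2) Omat_Ints by (intro Ints_sum) auto
  then obtain n where n: "(\<Sum>(j,k)\<in>A. Omat j k) = of_int n"
    by (elim Ints_cases)
  with assms(3,4) u_eq[of i A] sum_Emat_ge[OF assms(1,2)] have "10^3 * of_int n \<le> (55003::real)"
    by simp
  then have "n \<le> 55" by simp
  with n show ?thesis by simp
qed

text \<open>The three witnesses are the only partitions of the items into quadruples of
  \<open>O\<close>-weight 55; in the \<open>i\<close>-th one, (1,1) is bundled with exactly the three items that
  \<open>E\<^sup>i\<close> makes dearer, so all three bundles cost agent \<open>i\<close> exactly 4055000.\<close>

lemma MmS_d_ge:
  assumes "i \<in> {1..3}"
  shows "-4055000 \<le> MmS 3 (d i) items"
proof -
  consider "i = 1" | "i = 2" | "i = 3"
    using assms unfolding atLeastAtMost_1_3 by blast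
  then show ?thesis
  proof cases
    case 1
    have "{(1,1),(1,2),(1,3),(1,4)} \<union> {(2,1),(2,2),(2,3),(2,4)} \<union> {(3,1),(3,2),(3,3),(3,4)} = items"
      by (auto simp: items_eq)
    with 1 show ?thesis
      using min_le_MmS_3[OF finite_items, of "{(1,1),(1,2),(1,3),(1,4)}" "{(2,1),(2,2),(2,3),(2,4)}"
          "{(3,1),(3,2),(3,3),(3,4)}" "d i"]
      by (simp add: d_def u_eq Omat_def Emat_def)
  next
    case 2
    have "{(1,1),(1,2),(2,1),(3,1)} \<union> {(1,3),(2,2),(3,2),(3,3)} \<union> {(1,4),(2,3),(2,4),(3,4)} = items"
      by (auto simp: items_eq)
    with 2 show ?thesis
      using min_le_MmS_3[OF finite_items, of "{(1,1),(1,2),(2,1),(3,1)}" "{(1,3),(2,2),(3,2),(3,3)}"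
          "{(1,4),(2,3),(2,4),(3,4)}" "d i"]
      by (simp add: d_def u_eq Omat_def Emat_def)
  next
    case 3
    have "{(1,1),(1,3),(2,3),(3,4)} \<union> {(1,2),(2,1),(2,4),(3,2)} \<union> {(1,4),(2,2),(3,1),(3,3)} = items"
      by (auto simp: items_eq)
    with 3 show ?thesis
      using min_le_MmS_3[OF finite_items, of "{(1,1),(1,3),(2,3),(3,4)}" "{(1,2),(2,1),(2,4),(3,2)}"
          "{(1,4),(2,2),(3,1),(3,3)}" "d i"]
      by (simp add: d_def u_eq Omat_def Emat_def)
  qed
qed

text \<open>The bundles without (1,1) that agent \<open>i\<close> can receive in an MmS allocation.\<close>

definition acceptable_bundles :: "nat \<Rightarrow> (nat \<times> nat) set set" where
  "acceptable_bundles i = {A. A \<subseteq> items - {(1,1)} \<and> card A = 4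
     \<and> (\<Sum>(j,k)\<in>A. Omat j k) = 55 \<and> u i A \<le> 4055000}"

lemma acceptable_bundle_indicators:
  assumes "A \<in> acceptable_bundles i"
  defines "X \<equiv> items - {(1,1)}"
  shows "A \<subseteq> X"
    and "(\<Sum>x\<in>X. of_bool (x \<in> A)) = (4::real)"
    and "(\<Sum>x\<in>X. of_bool (x \<in> A) * (case x of (j,k) \<Rightarrow> Omat j k)) = 55"
    and "(\<Sum>x\<in>X. of_bool (x \<in> A) * (case x of (j,k) \<Rightarrow> Emat i j k)) \<le> 0"
proof -
  show A: "A \<subseteq> X"
    using assms by (simp add: acceptable_bundles_def)
  have fin: "finite X"
    unfolding X_def by (simp add: finite_items)
  have "real (card A) = 4" "(\<Sum>(j,k)\<in>A. Omat j k) = 55" "(\<Sum>(j,k)\<in>A. Emat i j k) \<le> 0"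
    using assms by (auto simp: acceptable_bundles_def u_eq)
  then show "(\<Sum>x\<in>X. of_bool (x \<in> A)) = (4::real)"
    and "(\<Sum>x\<in>X. of_bool (x \<in> A) * (case x of (j,k) \<Rightarrow> Omat j k)) = 55"
    and "(\<Sum>x\<in>X. of_bool (x \<in> A) * (case x of (j,k) \<Rightarrow> Emat i j k)) \<le> 0"
    unfolding real_of_card sum_as_indicator_sum[OF fin A] by simp_all
qed

text \<open>A finite search: in indicator form the constraints are linear over eleven booleans, which
  \<open>smt\<close> settles. The library simp rules for indicator sums must be disabled, since they fold
  the expanded sums back into cardinalities.\<close>

lemma acceptable_bundles_1:
  assumes "A \<in> acceptable_bundles 1"
  shows "A = {(2,1),(2,2),(2,3),(2,4)} \<or> A = {(3,1),(3,2),(3,3),(3,4)}"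
proof (rule eq_one_of_two_within)
  note indicators = acceptable_bundle_indicators[OF assms]
  show "A \<subseteq> items - {(1,1)}"
    by (fact indicators(1))
  show "(\<forall>x\<in>items - {(1,1)}. x \<in> A \<longleftrightarrow> x \<in> {(2,1),(2,2),(2,3),(2,4)})
      \<or> (\<forall>x\<in>items - {(1,1)}. x \<in> A \<longleftrightarrow> x \<in> {(3,1),(3,2),(3,3),(3,4)})"
    using indicators(2-4)
    by (simp add: items_eq Omat_def Emat_def del: sum_of_bool_eq sum_mult_of_bool_eq sum_of_bool_mult_eq)
      (smt (z3) of_bool_def)
qed (auto simp: items_eq)

lemma acceptable_bundles_2:
  assumes "A \<in> acceptable_bundles 2"
  shows "A = {(1,3),(2,2),(3,2),(3,3)} \<or> A = {(1,4),(2,3),(2,4),(3,4)}"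
proof (rule eq_one_of_two_within)
  note indicators = acceptable_bundle_indicators[OF assms]
  show "A \<subseteq> items - {(1,1)}"
    by (fact indicators(1))
  show "(\<forall>x\<in>items - {(1,1)}. x \<in> A \<longleftrightarrow> x \<in> {(1,3),(2,2),(3,2),(3,3)})
      \<or> (\<forall>x\<in>items - {(1,1)}. x \<in> A \<longleftrightarrow> x \<in> {(1,4),(2,3),(2,4),(3,4)})"
    using indicators(2-4)
    by (simp add: items_eq Omat_def Emat_def del: sum_of_bool_eq sum_mult_of_bool_eq sum_of_bool_mult_eq)
      (smt (z3) of_bool_def)
qed (auto simp: items_eq)

lemma acceptable_bundles_3:
  assumes "A \<in> acceptable_bundles 3"
  shows "A = {(1,2),(2,1),(2,4),(3,2)} \<or> A = {(1,4),(2,2),(3,1),(3,3)}"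
proof (rule eq_one_of_two_within)
  note indicators = acceptable_bundle_indicators[OF assms]
  show "A \<subseteq> items - {(1,1)}"
    by (fact indicators(1))
  show "(\<forall>x\<in>items - {(1,1)}. x \<in> A \<longleftrightarrow> x \<in> {(1,2),(2,1),(2,4),(3,2)})
      \<or> (\<forall>x\<in>items - {(1,1)}. x \<in> A \<longleftrightarrow> x \<in> {(1,4),(2,2),(3,1),(3,3)})"
    using indicators(2-4)
    by (simp add: items_eq Omat_def Emat_def del: sum_of_bool_eq sum_mult_of_bool_eq sum_of_bool_mult_eq)
      (smt (z3) of_bool_def)
qed (auto simp: items_eq)

lemma acceptable_bundles_intersect:
  assumes "a \<in> {1..3}" "b \<in> {1..3}" "a \<noteq> b"
    and "A \<in> acceptable_bundles a" "B \<in> acceptable_bundles b"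
  shows "A \<inter> B \<noteq> {}"
  using assms acceptable_bundles_1 acceptable_bundles_2 acceptable_bundles_3
  unfolding atLeastAtMost_1_3 by fastforce

lemma partitions_3_two_parts_avoid:
  assumes "S \<in> partitions 3 M"
  obtains a b where "a \<in> {1..3}" "b \<in> {1..3}" "a \<noteq> b" "x \<notin> S a" "x \<notin> S b"
proof -
  have "S 1 \<inter> S 2 = {}" "S 1 \<inter> S 3 = {}" "S 2 \<inter> S 3 = {}"
    using assms by (simp_all add: partitions_def)
  then consider "x \<notin> S 1" "x \<notin> S 2" | "x \<notin> S 1" "x \<notin> S 3" | "x \<notin> S 2" "x \<notin> S 3"
    by blast
  then show thesis
    by cases (rule that; simp)+
qed

lemma partition_card_eq_4:
  assumes S: "S \<in> partitions 3 items" and u_le: "\<forall>i\<in>{1..3}. u i (S i) \<le> 4055000"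
    and i: "i \<in> {1..3}"
  shows "card (S i) = 4"
proof -
  have "real (card (S i)) = 4"
  proof (rule sum_attains_bound_imp_eq[where f = "\<lambda>i. real (card (S i))", OF _ _ _ i])
    show "\<forall>i\<in>{1..3}. real (card (S i)) \<le> 4"
      using S u_le card_le_4_if_u_le by (auto simp: partitions_def)
    show "(\<Sum>i\<in>{1..3::nat}. 4) \<le> (\<Sum>i\<in>{1..3}. real (card (S i)))"
      using sum_over_partition[OF finite_items S, of "\<lambda>_. 1::real"] by (simp add: card_items)
  qed simp
  then show ?thesis by simp
qed

lemma partition_sum_Omat_eq_55:
  assumes S: "S \<in> partitions 3 items" and u_le: "\<forall>i\<in>{1..3}. u i (S i) \<le> 4055000"
    and i: "i \<in> {1..3}"
  shows "(\<Sum>(j,k)\<in>S i. Omat j k) = 55"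
proof (rule sum_attains_bound_imp_eq[where f = "\<lambda>i. \<Sum>(j,k)\<in>S i. Omat j k", OF _ _ _ i])
  show "\<forall>i\<in>{1..3}. (\<Sum>(j,k)\<in>S i. Omat j k) \<le> 55"
  proof
    fix i :: nat assume i: "i \<in> {1..3}"
    then have "S i \<subseteq> items" using S by (simp add: partitions_def)
    with i u_le partition_card_eq_4[OF S u_le i] show "(\<Sum>(j,k)\<in>S i. Omat j k) \<le> 55"
      by (simp add: sum_Omat_le_55_if_u_le)
  qed
  show "(\<Sum>i\<in>{1..3::nat}. 55) \<le> (\<Sum>i\<in>{1..3}. \<Sum>(j,k)\<in>S i. Omat j k)"
    using sum_over_partition[OF finite_items S, of "\<lambda>(j,k). Omat j k"] by (simp add: sum_Omat_items)
qed simp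

theorem proposition3:
  shows "\<not> (\<exists>S\<in>partitions 3 items. \<forall>i\<in>{1..3}. d i (S i) \<ge> MmS 3 (d i) items)"
proof
  assume "\<exists>S\<in>partitions 3 items. \<forall>i\<in>{1..3}. d i (S i) \<ge> MmS 3 (d i) items"
  then obtain S where S: "S \<in> partitions 3 items"
    and MmS: "\<forall>i\<in>{1..3}. MmS 3 (d i) items \<le> d i (S i)" by blast
  have u_le: "\<forall>i\<in>{1..3}. u i (S i) \<le> 4055000"
    using MmS_d_ge MmS by (force simp: d_def)
  have acceptable: "S i \<in> acceptable_bundles i" if "i \<in> {1..3}" "(1,1) \<notin> S i" for i
    using that S partition_card_eq_4[OF S u_le] partition_sum_Omat_eq_55[OF S u_le] u_le
    by (auto simp: acceptable_bundles_def partitions_def)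
  obtain a b where ab: "a \<in> {1..3}" "b \<in> {1..3}" "a \<noteq> b" and "(1,1) \<notin> S a" "(1,1) \<notin> S b"
    using partitions_3_two_parts_avoid[OF S] .
  then have "S a \<inter> S b \<noteq> {}"
    using acceptable_bundles_intersect[OF ab] acceptable by blast
  with S ab show False
    by (simp add: partitions_def)
qed

end
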